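(* For all $0 < t < \infty$, $$\frac{6 - 10^{-20}}{t^2} > 3Q(t)^2.$$
   Context: $Q(t)$, $t\ge 0$, denotes the radial profile of the positive radial ground state of $\Delta\phi - \phi + |\phi|^2\phi = 0$ on $\mathbb{R}^3$; it solves $-Q'' - \frac{2}{t}Q' + Q - Q^3 = 0$. *)

theory Defs
  imports "HOL-Analysis.Analysis"
begin

text \<open>Radial profile of the positive radial ground state of
  Delta phi - phi + |phi|^2 phi = 0 on R^3: a positive solution of
  -Q'' - (2/t) Q' + Q - Q^3 = 0 on (0,oo), regular at the origin (Q'(0)=0),
  decaying to 0 at infinity. By the uniqueness theorem of Coffman/Kwong
  this characterizes Q uniquely.\<close>

definition ground_state_profile :: "(real \<Rightarrow> real) \<Rightarrow> bool" where
  "ground_state_profile Q \<longleftrightarrow>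
     (\<exists>Q' Q''.
        (\<forall>t\<ge>0. (Q has_real_derivative Q' t) (at t within {0..})) \<and>
        Q' 0 = 0 \<and>
        (\<forall>t>0. (Q' has_real_derivative Q'' t) (at t)) \<and>
        (\<forall>t>0. - Q'' t - (2 / t) * Q' t + Q t - (Q t)^3 = 0)) \<and>
     (\<forall>t\<ge>0. Q t > 0) \<and>
     (Q \<longlongrightarrow> 0) at_top"

end

theory Submission
  imports Defs
begin

(* Let U t = t * Q t, so that U'' = U (1 - Q^2). The energy U'^2/2 - U^2/2 + t^2 Q^4/4 is
   nonincreasing, and it is nonnegative because U cannot stay away from 0 while Q tends to 0;
   hence Q^2 >= 2 at every critical point of U. The energy Q'^2/2 - Q^2/2 + Q^4/4 gives in the
   same way Q 0^2 >= 2 and Q^2 >= 2 at critical points of Q, which are therefore strict local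
   maxima; so Q is decreasing.
   Suppose U t^2 >= 1.999 and let T be the first time at which U reaches sqrt 1.999. Then
   U' T >= 0 and U has a critical point after T, hence Q T^2 >= 2 and T < 1. The rescaled
   functions Y s = Q (T s) / Q T and P s = - s^2 Y'(s) satisfy Y 1 = 1, P >= 0,
   Y' = - P / s^2, P' >= s^2 (1.999 Y^3 - Y) and P 1 = 1 - U' T / Q T <= 1. Integrating
   these inequalities over the grid s = i/20, forward for P and backward for Y, improves
   given lower bounds for Y; after twenty such sweeps, carried out in rounded-down
   fixed-point arithmetic, the resulting lower bound for P 1 exceeds 1. *)

lemma increment_le_of_deriv_le:
  fixes f g f' g' :: "real \<Rightarrow> real"
  assumes "a \<le> b"
    and "\<And>x. a \<le> x \<Longrightarrow> x \<le> b \<Longrightarrow> (f has_real_derivative f' x) (at x)"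
    and "\<And>x. a \<le> x \<Longrightarrow> x \<le> b \<Longrightarrow> (g has_real_derivative g' x) (at x)"
    and "\<And>x. a \<le> x \<Longrightarrow> x \<le> b \<Longrightarrow> f' x \<le> g' x"
  shows "f b - f a \<le> g b - g a"
proof -
  have "(\<lambda>x. g x - f x) a \<le> (\<lambda>x. g x - f x) b"
  proof (rule DERIV_nonneg_imp_nondecreasing[OF assms(1)])
    fix x assume "a \<le> x" "x \<le> b"
    then show "\<exists>y. ((\<lambda>x. g x - f x) has_real_derivative y) (at x) \<and> 0 \<le> y"
      using assms(2-4) by (intro exI[of _ "g' x - f' x"]) (auto intro: DERIV_diff)
  qed
  then show ?thesis by simp
qed

lemma eventually_ge_1_if_deriv_ge:
  fixes g g' :: "real \<Rightarrow> real"
  assumes "0 < c"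
    and "\<And>t. a \<le> t \<Longrightarrow> (g has_real_derivative g' t) (at t)" and "\<And>t. a \<le> t \<Longrightarrow> c \<le> g' t"
  shows "\<exists>b\<ge>a. \<forall>t\<ge>b. 1 \<le> g t"
proof -
  define b where "b = a + (\<bar>g a\<bar> + 1) / c"
  have "a \<le> b"
    unfolding b_def using assms(1) by simp
  have "1 \<le> g t" if "b \<le> t" for t
  proof -
    have "c * t - c * a \<le> g t - g a"
      using \<open>a \<le> b\<close> that assms(2,3)
      by (intro increment_le_of_deriv_le[where f' = "\<lambda>_. c" and g' = g']) (auto intro!: derivative_eq_intros)
    moreover have "c * (b - a) = \<bar>g a\<bar> + 1"
      unfolding b_def using assms(1) by simp
    moreover have "c * b \<le> c * t"
      using that assms(1) by simp
    ultimately show ?thesis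
      by (simp add: algebra_simps)
  qed
  then show ?thesis
    using \<open>a \<le> b\<close> by blast
qed

lemma first_hitting_time:
  fixes f :: "real \<Rightarrow> real"
  assumes "a \<le> b" and cont: "continuous_on {a..b} f" and "f a < c" "c \<le> f b"
  shows "\<exists>T. a < T \<and> T \<le> b \<and> f T = c \<and> (\<forall>s. a \<le> s \<and> s < T \<longrightarrow> f s < c)"
proof -
  define Z where "Z = {t \<in> {a..b}. f t = c}"
  have "closed Z"
    unfolding Z_def by (rule continuous_closed_preimage_constant[OF cont]) simp
  moreover have "Z \<noteq> {}"
    using IVT'[of f a c b] assms unfolding Z_def by auto
  moreover have "bdd_below Z"
    unfolding Z_def by (rule bdd_belowI[of _ a]) auto
  ultimately have "Inf Z \<in> Z"
    by (intro closed_contains_Inf)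
  then have T: "a \<le> Inf Z" "Inf Z \<le> b" "f (Inf Z) = c"
    unfolding Z_def by auto
  have "f s < c" if s: "a \<le> s" "s < Inf Z" for s
  proof (rule ccontr)
    assume "\<not> f s < c"
    moreover have "continuous_on {a..s} f"
      using cont by (rule continuous_on_subset) (use s T in auto)
    ultimately obtain z where z: "a \<le> z" "z \<le> s" "f z = c"
      using IVT'[of f a c s] assms(3) s(1) by auto
    then have "z \<in> Z"
      using s T unfolding Z_def by auto
    then have "Inf Z \<le> z"
      using \<open>bdd_below Z\<close> by (rule cInf_lower)
    then show False
      using z s by simp
  qed
  moreover have "a \<noteq> Inf Z"
    using T assms(3) by auto
  ultimately show ?thesis
    using T by (intro exI[of _ "Inf Z"]) auto
qed

lemma last_hitting_time:
  fixes f :: "real \<Rightarrow> real"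
  assumes "a \<le> b" and cont: "continuous_on {a..b} f" and "f a \<le> c" "c < f b"
  shows "\<exists>T. a \<le> T \<and> T < b \<and> f T = c \<and> (\<forall>s. T < s \<and> s \<le> b \<longrightarrow> c < f s)"
proof -
  have "continuous_on {-b..-a} (\<lambda>s. - f (- s))"
    by (intro continuous_intros continuous_on_compose2[OF cont]) auto
  then obtain T where "- b < T" "T \<le> - a" "- f (- T) = - c" "\<forall>s. - b \<le> s \<and> s < T \<longrightarrow> - f (- s) < - c"
    using first_hitting_time[of "- b" "- a" "\<lambda>s. - f (- s)" "- c"] assms by auto
  then show ?thesis
    by (intro exI[of _ "- T"]) (auto dest: spec[of _ "- _"])
qed

lemma deriv_nonneg_if_less_left:
  fixes f :: "real \<Rightarrow> real"
  assumes "(f has_real_derivative D) (at x)" "a < x" "\<And>s. a \<le> s \<Longrightarrow> s < x \<Longrightarrow> f s < f x"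
  shows "0 \<le> D"
proof (rule ccontr)
  assume "\<not> 0 \<le> D"
  then obtain d where "0 < d" and d: "\<And>h. 0 < h \<Longrightarrow> h < d \<Longrightarrow> f x < f (x - h)"
    using DERIV_neg_dec_left[OF assms(1)] by force
  obtain h where "0 < h" "h < min d (x - a)"
    using dense[of 0 "min d (x - a)"] \<open>0 < d\<close> \<open>a < x\<close> by auto
  then show False
    using d[of h] assms(3)[of "x - h"] by simp
qed

lemma deriv_nonneg_if_greater_right:
  fixes f :: "real \<Rightarrow> real"
  assumes "(f has_real_derivative D) (at x)" "x < b" "\<And>s. x < s \<Longrightarrow> s \<le> b \<Longrightarrow> f x < f s"
  shows "0 \<le> D"
proof (rule ccontr)
  assume "\<not> 0 \<le> D"
  then obtain d where "0 < d" and d: "\<And>h. 0 < h \<Longrightarrow> h < d \<Longrightarrow> f (x + h) < f x"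
    using DERIV_neg_dec_right[OF assms(1)] by force
  obtain h where "0 < h" "h < min d (b - x)"
    using dense[of 0 "min d (b - x)"] \<open>0 < d\<close> \<open>x < b\<close> by auto
  then show False
    using d[of h] assms(3)[of "x + h"] by simp
qed

lemma sq_ge_2_if_quartic_nonneg:
  fixes q :: real
  assumes "q \<noteq> 0" "0 \<le> q ^ 4 / 4 - q ^ 2 / 2"
  shows "2 \<le> q ^ 2"
proof -
  have "0 \<le> q ^ 2 * (q ^ 2 - 2)"
    using assms(2) by (simp add: algebra_simps power2_eq_square power4_eq_xxxx)
  moreover have "0 < q ^ 2"
    using assms(1) by simp
  ultimately show ?thesis
    by (simp add: zero_le_mult_iff)
qed

lemma sub_cube_neg_if_sq_gt_1:
  fixes q :: real
  assumes "0 < q" "1 < q ^ 2"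
  shows "q - q ^ 3 < 0"
proof -
  have "q * 1 < q * q ^ 2"
    using assms by (intro mult_strict_left_mono) auto
  then show ?thesis
    by (simp add: power3_eq_cube power2_eq_square)
qed

section \<open>Fixed-point lower bounds\<close>

(* The integer k stands for the real number k / 10^6. All integer operations below round
   down, so a computed number is a lower bound of the real quantity it approximates. *)

definition scale :: int where "scale = 10 ^ 6"

definition fx :: "int \<Rightarrow> real" where "fx k = real_of_int k / real_of_int scale"

definition fmul :: "int \<Rightarrow> int \<Rightarrow> int" where "fmul a b = (a * b) div scale"

lemma fx_diff [simp]: "fx (a - b) = fx a - fx b"
  and fx_add [simp]: "fx (a + b) = fx a + fx b"
  by (simp_all add: fx_def diff_divide_distrib add_divide_distrib)

lemma fx_0 [simp]: "fx 0 = 0"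
  by (simp add: fx_def)

lemma fx_scale [simp]: "fx scale = 1"
  by (simp add: fx_def scale_def)

lemma fx_nonneg_iff [simp]: "0 \<le> fx a \<longleftrightarrow> 0 \<le> a"
  by (simp add: fx_def scale_def)

lemma fx_div_le: "fx (k div l) \<le> real_of_int k / real_of_int l / real_of_int scale"
proof -
  have "real_of_int (k div l) \<le> real_of_int k / real_of_int l"
    by (metis floor_divide_of_int_eq of_int_floor_le)
  then show ?thesis
    unfolding fx_def scale_def by (simp add: divide_right_mono)
qed

lemma fx_fmul_le: "fx (fmul a b) \<le> fx a * fx b"
  using fx_div_le[of "a * b" scale] by (simp add: fmul_def fx_def scale_def)

lemma fmul_nonneg: "0 \<le> a \<Longrightarrow> 0 \<le> b \<Longrightarrow> 0 \<le> fmul a b"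
  by (simp add: fmul_def scale_def pos_imp_zdiv_nonneg_iff)

lemma fx_fmul_le_mult:
  assumes "fx a \<le> x" "fx b \<le> y" "0 \<le> b" "0 \<le> x"
  shows "fx (fmul a b) \<le> x * y"
proof -
  have "fx a * fx b \<le> x * y"
    using assms by (intro mult_mono) auto
  then show ?thesis
    using fx_fmul_le[of a b] by linarith
qed

definition node :: "nat \<Rightarrow> real" where "node i = real i / 20"

(* Lower bounds of the integrals of r^2, of 1/r^2 and of (r^3 - a^3) / (3 r^2) over the
   cell [a, b] = [node i, node (i + 1)]. *)

definition cube_gap :: "nat \<Rightarrow> int" where
  "cube_gap i = (scale * (3 * int i ^ 2 + 3 * int i + 1)) div 24000"

definition recip_gap :: "nat \<Rightarrow> int" where
  "recip_gap i = (20 * scale) div (int i * (int i + 1))"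

definition tail_weight :: "nat \<Rightarrow> int" where
  "tail_weight i = (scale * (3 * int i + 1)) div (2400 * (int i + 1))"

lemma cube_gap_nonneg: "0 \<le> cube_gap i"
  and recip_gap_nonneg: "0 \<le> recip_gap i"
  and tail_weight_nonneg: "0 \<le> tail_weight i"
  by (simp_all add: cube_gap_def recip_gap_def tail_weight_def scale_def pos_imp_zdiv_nonneg_iff div_int_pos_iff)

lemma fx_cube_gap: "fx (cube_gap i) \<le> (node (Suc i) ^ 3 - node i ^ 3) / 3"
proof -
  have "fx (cube_gap i)
      \<le> real_of_int (scale * (3 * int i ^ 2 + 3 * int i + 1)) / real_of_int 24000 / real_of_int scale"
    unfolding cube_gap_def by (rule fx_div_le)
  also have "\<dots> = (node (Suc i) ^ 3 - node i ^ 3) / 3"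
    unfolding node_def by (simp add: scale_def field_simps power3_eq_cube power2_eq_square)
  finally show ?thesis .
qed

lemma fx_recip_gap:
  assumes "1 \<le> i"
  shows "fx (recip_gap i) \<le> 1 / node i - 1 / node (Suc i)"
proof -
  have "fx (recip_gap i) \<le> real_of_int (20 * scale) / real_of_int (int i * (int i + 1)) / real_of_int scale"
    unfolding recip_gap_def by (rule fx_div_le)
  also have "\<dots> = 20 / (real i * (real i + 1))"
    using assms by (simp add: scale_def divide_simps)
  also have "\<dots> = 1 / node i - 1 / node (Suc i)"
    using assms unfolding node_def by (simp add: divide_simps)
  finally show ?thesis .
qed

lemma fx_tail_weight:
  assumes "1 \<le> i"
  shows "fx (tail_weight i)
    \<le> ((node (Suc i) ^ 2 - node i ^ 2) / 2 + node i ^ 3 * (1 / node (Suc i) - 1 / node i)) / 3"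
proof -
  have "fx (tail_weight i)
      \<le> real_of_int (scale * (3 * int i + 1)) / real_of_int (2400 * (int i + 1)) / real_of_int scale"
    unfolding tail_weight_def by (rule fx_div_le)
  also have "\<dots> = (3 * real i + 1) / (2400 * (real i + 1))"
    by (simp add: scale_def divide_simps algebra_simps)
  also have "\<dots> = ((node (Suc i) ^ 2 - node i ^ 2) / 2 + node i ^ 3 * (1 / node (Suc i) - 1 / node i)) / 3"
    using assms unfolding node_def by (simp add: divide_simps power2_eq_square power3_eq_cube) algebra
  finally show ?thesis .
qed

definition cubic_rate :: "real \<Rightarrow> real" where
  "cubic_rate y = 1999 / 1000 * y ^ 3 - y"

definition cubic_rate_fx :: "int \<Rightarrow> int" where
  "cubic_rate_fx a = (let b = max scale a in fmul 1999000 (fmul b (fmul b b)) - b)"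

lemma cubic_rate_mono:
  assumes "1 \<le> a" "a \<le> b"
  shows "cubic_rate a \<le> cubic_rate b"
proof -
  have "1 \<le> b ^ 2" "0 \<le> b * a"
    using assms by (simp_all add: one_le_power)
  then have "1 \<le> b ^ 2 + b * a + a ^ 2"
    by (simp add: add_increasing2)
  then have "0 \<le> (b - a) * (1999 / 1000 * (b ^ 2 + b * a + a ^ 2) - 1)"
    using assms by (intro mult_nonneg_nonneg) auto
  also have "\<dots> = cubic_rate b - cubic_rate a"
    unfolding cubic_rate_def by (simp add: field_simps power2_eq_square power3_eq_cube)
  finally show ?thesis
    by simp
qed

lemma cubic_rate_nonneg: "1 \<le> a \<Longrightarrow> 0 \<le> cubic_rate a"
  using cubic_rate_mono[of 1 a] by (simp add: cubic_rate_def)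

lemma fx_cubic_rate_fx: "fx (cubic_rate_fx a) \<le> cubic_rate (max 1 (fx a))"
proof -
  define b where "b = max scale a"
  have B: "fx b = max 1 (fx a)" "0 \<le> b"
    unfolding b_def by (auto simp: max_def scale_def fx_def)
  have "fx (fmul b b) \<le> fx b * fx b"
    by (rule fx_fmul_le)
  then have "fx (fmul b (fmul b b)) \<le> fx b * (fx b * fx b)"
    using B by (intro fx_fmul_le_mult) (auto intro: fmul_nonneg)
  then have "fx (fmul 1999000 (fmul b (fmul b b))) \<le> 1999 / 1000 * (fx b * (fx b * fx b))"
    using B by (intro fx_fmul_le_mult) (auto intro: fmul_nonneg simp: fx_def scale_def)
  then show ?thesis
    unfolding cubic_rate_fx_def cubic_rate_def b_def[symmetric] Let_def B(1)[symmetric]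
    by (simp add: power3_eq_cube)
qed

(* From lower bounds ys for Y at the nodes 1, ..., 20, flux_bounds produces lower bounds for
   P at the same nodes, starting from P >= 0 at node 1; profile_bounds then produces new lower
   bounds for Y, starting from the old bound at node 20. *)

primrec flux_bounds :: "nat \<Rightarrow> int \<Rightarrow> int list \<Rightarrow> int list" where
  "flux_bounds i d [] = [d]"
| "flux_bounds i d (a # as) = d # flux_bounds (Suc i) (d + fmul (cubic_rate_fx a) (cube_gap i)) as"

definition push_bound :: "nat \<Rightarrow> int \<times> int \<Rightarrow> int list \<Rightarrow> int list" where
  "push_bound i p ys =
     (hd ys + fmul (max 0 (fst p)) (recip_gap i) + fmul (cubic_rate_fx (snd p)) (tail_weight i)) # ys"

primrec profile_bounds :: "nat \<Rightarrow> (int \<times> int) list \<Rightarrow> int \<Rightarrow> int list" where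
  "profile_bounds i [] z = [z]"
| "profile_bounds i (p # ps) z = push_bound i p (profile_bounds (Suc i) ps z)"

definition refine :: "int list \<Rightarrow> int list" where
  "refine ys = profile_bounds 1 (zip (flux_bounds 1 0 (tl ys)) (tl ys)) (last ys)"

primrec refined :: "nat \<Rightarrow> int list" where
  "refined 0 = replicate 20 scale"
| "refined (Suc k) = refine (refined k)"

lemma length_flux_bounds: "length (flux_bounds i d as) = Suc (length as)"
  by (induction as arbitrary: i d) auto

lemma length_profile_bounds: "length (profile_bounds i ps z) = Suc (length ps)"
  by (induction ps arbitrary: i) (auto simp: push_bound_def)

lemma length_refined: "length (refined k) = 20"
  by (induction k) (simp_all add: refine_def length_flux_bounds length_profile_bounds)

lemma certificate: "scale < last (flux_bounds 1 0 (tl (refined 20)))"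
  by code_simp

primrec lower_bounds :: "(real \<Rightarrow> real) \<Rightarrow> nat \<Rightarrow> int list \<Rightarrow> bool" where
  "lower_bounds f i [] = True"
| "lower_bounds f i (x # xs) \<longleftrightarrow> fx x \<le> f (node i) \<and> lower_bounds f (Suc i) xs"

lemma profile_bounds_not_Nil: "profile_bounds i ps z \<noteq> []"
  by (cases ps) (simp_all add: push_bound_def)

lemma lower_bounds_tl: "lower_bounds f i xs \<Longrightarrow> lower_bounds f (Suc i) (tl xs)"
  by (cases xs) auto

lemma lower_bounds_take: "lower_bounds f i xs \<Longrightarrow> lower_bounds f i (take n xs)"
  by (induction xs arbitrary: i n) (auto simp: take_Cons split: nat.split)

lemma lower_bounds_last:
  "lower_bounds f i xs \<Longrightarrow> xs \<noteq> [] \<Longrightarrow> fx (last xs) \<le> f (node (i + length xs - 1))"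
proof (induction xs arbitrary: i)
  case (Cons x xs)
  then show ?case
    using Cons.IH[of "Suc i"] by (cases "xs = []") auto
qed simp

section \<open>The rescaled system\<close>

locale rescaled_profile =
  fixes Y P P' :: "real \<Rightarrow> real"
  assumes Y_deriv: "\<And>s. 0 < s \<Longrightarrow> (Y has_real_derivative - P s / s ^ 2) (at s)"
    and P_deriv: "\<And>s. 0 < s \<Longrightarrow> (P has_real_derivative P' s) (at s)"
    and P'_ge: "\<And>s. 0 < s \<Longrightarrow> s ^ 2 * cubic_rate (Y s) \<le> P' s"
    and P_nonneg: "\<And>s. 0 < s \<Longrightarrow> 0 \<le> P s"
    and Y_1: "Y 1 = 1"
begin

lemma Y_antimono:
  assumes "0 < a" "a \<le> b"
  shows "Y b \<le> Y a"
proof (rule DERIV_nonpos_imp_nonincreasing[where f = Y, OF assms(2)])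
  fix x assume "a \<le> x"
  with assms have "0 < x"
    by simp
  then show "\<exists>y. (Y has_real_derivative y) (at x) \<and> y \<le> 0"
    using Y_deriv P_nonneg by (intro exI[of _ "- P x / x ^ 2"]) auto
qed

lemma Y_ge_1: "0 < s \<Longrightarrow> s \<le> 1 \<Longrightarrow> 1 \<le> Y s"
  using Y_antimono[of s 1] Y_1 by simp

lemma P_increment_ge:
  assumes "0 < a" "a \<le> b" "1 \<le> A" "A \<le> Y b"
  shows "P a + cubic_rate A * ((b ^ 3 - a ^ 3) / 3) \<le> P b"
proof -
  have "cubic_rate A * b ^ 3 / 3 - cubic_rate A * a ^ 3 / 3 \<le> P b - P a"
  proof (rule increment_le_of_deriv_le[where f' = "\<lambda>r. cubic_rate A * r ^ 2" and g' = P'])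
    fix r assume r: "a \<le> r" "r \<le> b"
    show "((\<lambda>r. cubic_rate A * r ^ 3 / 3) has_real_derivative cubic_rate A * r ^ 2) (at r)"
      by (auto intro!: derivative_eq_intros)
    show "(P has_real_derivative P' r) (at r)"
      using P_deriv r assms(1) by simp
    have "cubic_rate A \<le> cubic_rate (Y r)"
      using assms r Y_antimono[of r b] by (intro cubic_rate_mono) auto
    then have "cubic_rate A * r ^ 2 \<le> r ^ 2 * cubic_rate (Y r)"
      by (simp add: mult.commute mult_right_mono)
    also have "\<dots> \<le> P' r"
      using P'_ge r assms(1) by simp
    finally show "cubic_rate A * r ^ 2 \<le> P' r" .
  qed (use assms in auto)
  then show ?thesis
    by (simp add: algebra_simps diff_divide_distrib)
qed

lemma Y_decrement_ge:
  assumes "0 < a" "a \<le> b" "1 \<le> A" "A \<le> Y b"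
  shows "Y b + P a * (1 / a - 1 / b) + cubic_rate A * (((b ^ 2 - a ^ 2) / 2 + a ^ 3 * (1 / b - 1 / a)) / 3)
    \<le> Y a"
proof -
  define K where "K r = - P a / r + cubic_rate A / 3 * (r ^ 2 / 2 + a ^ 3 / r)" for r
  have "K b - K a \<le> - Y b - - Y a"
  proof (rule increment_le_of_deriv_le[where f' = "\<lambda>r. (P a + cubic_rate A * (r ^ 3 - a ^ 3) / 3) / r ^ 2"
        and g' = "\<lambda>r. P r / r ^ 2"])
    fix r assume r: "a \<le> r" "r \<le> b"
    then have "0 < r"
      using assms(1) by simp
    have "(K has_real_derivative P a / r ^ 2 + cubic_rate A / 3 * (2 * r / 2 - a ^ 3 / r ^ 2)) (at r)"
      unfolding K_def using \<open>0 < r\<close>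
      by (auto intro!: derivative_eq_intros simp: power2_eq_square)
    moreover have "P a / r ^ 2 + cubic_rate A / 3 * (2 * r / 2 - a ^ 3 / r ^ 2)
        = (P a + cubic_rate A * (r ^ 3 - a ^ 3) / 3) / r ^ 2"
      using \<open>0 < r\<close> by (simp add: field_simps power2_eq_square power3_eq_cube)
    ultimately show "(K has_real_derivative (P a + cubic_rate A * (r ^ 3 - a ^ 3) / 3) / r ^ 2) (at r)"
      by simp
    show "((\<lambda>r. - Y r) has_real_derivative P r / r ^ 2) (at r)"
      using DERIV_minus[OF Y_deriv[OF \<open>0 < r\<close>]] by simp
    have "A \<le> Y r"
      using assms r Y_antimono[of r b] \<open>0 < r\<close> by simp
    then have "P a + cubic_rate A * (r ^ 3 - a ^ 3) / 3 \<le> P r"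
      using P_increment_ge[of a r A] assms r by simp
    then show "(P a + cubic_rate A * (r ^ 3 - a ^ 3) / 3) / r ^ 2 \<le> P r / r ^ 2"
      by (simp add: divide_right_mono)
  qed (use assms in auto)
  moreover have "K b - K a
      = P a * (1 / a - 1 / b) + cubic_rate A * (((b ^ 2 - a ^ 2) / 2 + a ^ 3 * (1 / b - 1 / a)) / 3)"
    using assms unfolding K_def by (simp add: field_simps power2_eq_square power3_eq_cube)
  ultimately show ?thesis
    by linarith
qed

lemma lower_bounds_replicate: "1 \<le> i \<Longrightarrow> i + n \<le> 21 \<Longrightarrow> lower_bounds Y i (replicate n scale)"
  by (induction n arbitrary: i) (auto simp: node_def intro!: Y_ge_1)

lemma flux_bounds_lower:
  "1 \<le> i \<Longrightarrow> i + length as \<le> 20 \<Longrightarrow> fx d \<le> P (node i) \<Longrightarrow> lower_bounds Y (Suc i) as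
    \<Longrightarrow> lower_bounds P i (flux_bounds i d as)"
proof (induction as arbitrary: i d)
  case (Cons a as)
  have nodes: "0 < node i" "node i \<le> node (Suc i)" "node (Suc i) \<le> 1"
    using Cons.prems(1,2) by (auto simp: node_def)
  define A where "A = max 1 (fx a)"
  have A: "1 \<le> A" "A \<le> Y (node (Suc i))"
    using Cons.prems(4) Y_ge_1[of "node (Suc i)"] nodes unfolding A_def by auto
  have "fx (fmul (cubic_rate_fx a) (cube_gap i)) \<le> cubic_rate A * ((node (Suc i) ^ 3 - node i ^ 3) / 3)"
    using fx_cubic_rate_fx[of a] fx_cube_gap[of i] cube_gap_nonneg[of i] cubic_rate_nonneg[OF A(1)]
    unfolding A_def by (intro fx_fmul_le_mult) auto
  then have "fx (d + fmul (cubic_rate_fx a) (cube_gap i)) \<le> P (node (Suc i))"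
    using P_increment_ge[of "node i" "node (Suc i)" A] nodes A Cons.prems(3) by simp
  then show ?case
    using Cons by simp
qed simp

lemma push_bound_lower:
  assumes "1 \<le> i" "i < 20" "fx d \<le> P (node i)" "fx a \<le> Y (node (Suc i))"
    and "lower_bounds Y (Suc i) ys" "ys \<noteq> []"
  shows "lower_bounds Y i (push_bound i (d, a) ys)"
proof -
  have nodes: "0 < node i" "node i \<le> node (Suc i)" "node (Suc i) \<le> 1"
    using assms(1,2) by (auto simp: node_def)
  define A where "A = max 1 (fx a)"
  have A: "1 \<le> A" "A \<le> Y (node (Suc i))"
    using assms(4) Y_ge_1[of "node (Suc i)"] nodes unfolding A_def by auto
  define D where "D = fx (max 0 d)"
  have D: "0 \<le> D" "D \<le> P (node i)"
    using assms(3) P_nonneg[of "node i"] nodes unfolding D_def by (auto simp: max_def)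
  have "fx (fmul (max 0 d) (recip_gap i)) \<le> D * (1 / node i - 1 / node (Suc i))"
    using fx_recip_gap[of i] recip_gap_nonneg[of i] D assms(1)
    unfolding D_def by (intro fx_fmul_le_mult) auto
  moreover have "fx (fmul (cubic_rate_fx a) (tail_weight i))
      \<le> cubic_rate A * (((node (Suc i) ^ 2 - node i ^ 2) / 2
          + node i ^ 3 * (1 / node (Suc i) - 1 / node i)) / 3)"
    using fx_cubic_rate_fx[of a] fx_tail_weight[of i] tail_weight_nonneg[of i]
      cubic_rate_nonneg[OF A(1)] assms(1)
    unfolding A_def by (intro fx_fmul_le_mult) auto
  moreover have "D * (1 / node i - 1 / node (Suc i)) \<le> P (node i) * (1 / node i - 1 / node (Suc i))"
    using D nodes by (intro mult_right_mono) (auto simp: divide_simps)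
  moreover have "fx (hd ys) \<le> Y (node (Suc i))"
    using assms(5,6) by (cases ys) auto
  moreover have "fx (hd (push_bound i (d, a) ys))
      = fx (hd ys) + fx (fmul (max 0 d) (recip_gap i)) + fx (fmul (cubic_rate_fx a) (tail_weight i))"
    by (simp add: push_bound_def)
  ultimately have "fx (hd (push_bound i (d, a) ys)) \<le> Y (node i)"
    using Y_decrement_ge[of "node i" "node (Suc i)" A] nodes A by linarith
  then show ?thesis
    using assms(5) by (simp add: push_bound_def)
qed

lemma profile_bounds_lower:
  "1 \<le> i \<Longrightarrow> i + length ps \<le> 20 \<Longrightarrow> lower_bounds P i (map fst ps) \<Longrightarrow> lower_bounds Y (Suc i) (map snd ps)
    \<Longrightarrow> fx z \<le> Y (node (i + length ps)) \<Longrightarrow> lower_bounds Y i (profile_bounds i ps z)"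
proof (induction ps arbitrary: i)
  case (Cons p ps)
  obtain d a where p: "p = (d, a)"
    by fastforce
  have "lower_bounds Y (Suc i) (profile_bounds (Suc i) ps z)"
    using Cons.prems by (intro Cons.IH) (auto simp: p)
  then have "lower_bounds Y i (push_bound i (d, a) (profile_bounds (Suc i) ps z))"
    using Cons.prems profile_bounds_not_Nil by (intro push_bound_lower) (auto simp: p)
  then show ?case
    by (simp add: p)
qed simp

lemma refine_lower:
  assumes "length ys = 20" "lower_bounds Y 1 ys"
  shows "lower_bounds Y 1 (refine ys)"
proof -
  obtain y ys' where ys: "ys = y # ys'" "length ys' = 19"
    using assms(1) by (cases ys) auto
  define ds where "ds = flux_bounds 1 0 ys'"
  have "length ds = 20"
    unfolding ds_def using ys(2) by (simp add: length_flux_bounds)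
  have "lower_bounds Y (Suc 1) ys'"
    using assms(2) ys(1) by simp
  then have "lower_bounds P 1 ds"
    unfolding ds_def using ys(2) P_nonneg[of "node 1"] by (intro flux_bounds_lower) (auto simp: node_def)
  then have "lower_bounds P 1 (map fst (zip ds ys'))"
    by (simp add: lower_bounds_take map_fst_zip_take)
  moreover have "lower_bounds Y (Suc 1) (map snd (zip ds ys'))"
    using \<open>lower_bounds Y (Suc 1) ys'\<close> \<open>length ds = 20\<close> ys(2) by (simp add: map_snd_zip_take)
  moreover have "fx (last ys) \<le> Y (node 20)"
    using lower_bounds_last[OF assms(2)] assms(1) ys(1) by simp
  moreover have "refine ys = profile_bounds 1 (zip ds ys') (last ys)"
    unfolding refine_def ds_def ys(1) by simp
  ultimately show ?thesis
    using \<open>length ds = 20\<close> ys(2) by (simp add: profile_bounds_lower)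
qed

lemma P_1_gt_1: "1 < P 1"
proof -
  have refined_lower: "lower_bounds Y 1 (refined k)" for k
  proof (induction k)
    case 0
    show ?case
      by (simp add: lower_bounds_replicate)
  next
    case (Suc k)
    show ?case
      using refine_lower[OF length_refined Suc.IH] by simp
  qed
  define ds where "ds = flux_bounds 1 0 (tl (refined 20))"
  have "length ds = 20"
    unfolding ds_def by (simp add: length_flux_bounds length_refined)
  have "lower_bounds P 1 ds"
    unfolding ds_def using P_nonneg[of "node 1"] length_refined[of 20] lower_bounds_tl[OF refined_lower]
    by (intro flux_bounds_lower) (auto simp: node_def)
  then have "fx (last ds) \<le> P (node 20)"
    using lower_bounds_last[of P 1 ds] \<open>length ds = 20\<close> by force
  moreover have "1 < fx (last ds)"
    using certificate unfolding ds_def by (simp add: fx_def scale_def)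
  ultimately show ?thesis
    by (simp add: node_def)
qed

end

section \<open>The ground state\<close>

locale ground_state =
  fixes Q Q' Q'' :: "real \<Rightarrow> real"
  assumes Q_deriv_within: "\<And>t. 0 \<le> t \<Longrightarrow> (Q has_real_derivative Q' t) (at t within {0..})"
    and Q'_deriv: "\<And>t. 0 < t \<Longrightarrow> (Q' has_real_derivative Q'' t) (at t)"
    and ode: "\<And>t. 0 < t \<Longrightarrow> - Q'' t - (2 / t) * Q' t + Q t - (Q t) ^ 3 = 0"
    and Q_pos: "\<And>t. 0 \<le> t \<Longrightarrow> 0 < Q t"
    and Q_tendsto_0: "(Q \<longlongrightarrow> 0) at_top"
begin

lemma Q''_eq: "0 < t \<Longrightarrow> Q'' t = Q t - Q t ^ 3 - 2 / t * Q' t"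
  using ode[of t] by simp

lemma Q_deriv:
  assumes "0 < t"
  shows "(Q has_real_derivative Q' t) (at t)"
proof -
  have "(Q has_real_derivative Q' t) (at t within {0<..})"
    by (rule has_field_derivative_subset[OF Q_deriv_within]) (use assms in auto)
  then show ?thesis
    using at_within_open[of t "{0<..}"] assms by simp
qed

lemma continuous_on_Q: "continuous_on {0..} Q"
  unfolding continuous_on_eq_continuous_within by (auto intro: DERIV_continuous[OF Q_deriv_within])

lemma isCont_Q': "0 < t \<Longrightarrow> isCont Q' t"
  using Q'_deriv DERIV_isCont by blast

lemma continuous_on_Q': "0 < a \<Longrightarrow> continuous_on {a..b} Q'"
  by (intro continuous_at_imp_continuous_on) (auto intro!: isCont_Q')

definition energy :: "real \<Rightarrow> real" where
  "energy t = Q' t ^ 2 / 2 - Q t ^ 2 / 2 + Q t ^ 4 / 4"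

lemma energy_deriv: "0 < t \<Longrightarrow> (energy has_real_derivative - 2 * Q' t ^ 2 / t) (at t)"
proof -
  assume "0 < t"
  have "(energy has_real_derivative Q' t * Q'' t - Q t * Q' t + Q t ^ 3 * Q' t) (at t)"
    unfolding energy_def[abs_def]
    by (rule derivative_eq_intros Q_deriv[OF \<open>0 < t\<close>] Q'_deriv[OF \<open>0 < t\<close>] refl | simp)+
  moreover have "Q' t * Q'' t - Q t * Q' t + Q t ^ 3 * Q' t = - 2 * Q' t ^ 2 / t"
    unfolding Q''_eq[OF \<open>0 < t\<close>] using \<open>0 < t\<close> by (simp add: field_simps power2_eq_square)
  ultimately show ?thesis
    by simp
qed

lemma energy_antimono: "0 < a \<Longrightarrow> a \<le> b \<Longrightarrow> energy b \<le> energy a"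
  by (rule DERIV_nonpos_imp_nonincreasing[where f = energy])
    (auto intro!: exI energy_deriv simp: divide_nonpos_pos)

lemma energy_nonneg:
  assumes "0 < t"
  shows "0 \<le> energy t"
proof -
  have "((\<lambda>s. Q s ^ 4 / 4 - Q s ^ 2 / 2) \<longlongrightarrow> 0 ^ 4 / 4 - 0 ^ 2 / 2) at_top"
    by (intro tendsto_intros Q_tendsto_0) simp_all
  moreover have "eventually (\<lambda>s. Q s ^ 4 / 4 - Q s ^ 2 / 2 \<le> energy t) at_top"
    unfolding eventually_at_top_linorder
  proof (intro exI allI impI)
    fix s assume "t \<le> s"
    then have "energy s \<le> energy t"
      using energy_antimono assms by blast
    then show "Q s ^ 4 / 4 - Q s ^ 2 / 2 \<le> energy t"
      unfolding energy_def using zero_le_power2[of "Q' s"] by linarith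
  qed
  ultimately show ?thesis
    by (intro tendsto_upperbound) auto
qed

lemma Q_sq_ge_2_if_Q'_zero: "0 < t \<Longrightarrow> Q' t = 0 \<Longrightarrow> 2 \<le> Q t ^ 2"
  using energy_nonneg[of t] Q_pos[of t]
  by (intro sq_ge_2_if_quartic_nonneg) (auto simp: energy_def)

definition flux :: "real \<Rightarrow> real" where "flux t = t ^ 2 * Q' t"

lemma flux_deriv: "0 < t \<Longrightarrow> (flux has_real_derivative t ^ 2 * (Q t - Q t ^ 3)) (at t)"
proof -
  assume "0 < t"
  have "(flux has_real_derivative 2 * t * Q' t + t ^ 2 * Q'' t) (at t)"
    unfolding flux_def[abs_def]
    by (rule derivative_eq_intros Q'_deriv[OF \<open>0 < t\<close>] refl | simp)+
  moreover have "2 * t * Q' t + t ^ 2 * Q'' t = t ^ 2 * (Q t - Q t ^ 3)"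
    unfolding Q''_eq[OF \<open>0 < t\<close>] using \<open>0 < t\<close> by (simp add: field_simps power2_eq_square)
  ultimately show ?thesis
    by simp
qed

(* No regularity of Q' at 0 is assumed: the mean value theorem for the bounded function Q gives points arbitrarily close
   to 0 at which the flux is small. *)

lemma exists_small_flux_near_0:
  assumes "0 < d" "0 < e"
  shows "\<exists>z. 0 < z \<and> z < d \<and> \<bar>flux z\<bar> \<le> e"
proof -
  obtain B where "0 \<le> B" and B: "\<And>r. r \<in> {0..1} \<Longrightarrow> norm (Q r) \<le> B"
    by (rule continuous_on_compact_bound[OF compact_Icc[of 0 1] continuous_on_subset[OF continuous_on_Q]]) auto
  define t where "t = min (min d 1) (e / (2 * B + 1))"
  have "0 < t" "t \<le> d" "t \<le> 1"
    using assms \<open>0 \<le> B\<close> unfolding t_def by auto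
  have "t \<le> e / (2 * B + 1)"
    unfolding t_def by simp
  then have "t * (2 * B + 1) \<le> e"
    by (subst (asm) pos_le_divide_eq) (use \<open>0 \<le> B\<close> in auto)
  then have "t * (2 * B) \<le> e"
    using \<open>0 < t\<close> by (simp add: algebra_simps)
  obtain l z where z: "0 < z" "z < t" "(Q has_real_derivative l) (at z)" "Q t - Q 0 = (t - 0) * l"
    using MVT[of 0 t Q] \<open>0 < t\<close> continuous_on_subset[OF continuous_on_Q, of "{0..t}"] Q_deriv
    by (auto simp: real_differentiable_def)
  have "l = Q' z"
    using DERIV_unique[OF z(3) Q_deriv[OF z(1)]] .
  have "t * \<bar>Q' z\<bar> \<le> 2 * B"
    using z(4) B[of t] B[of 0] \<open>t \<le> 1\<close> \<open>0 < t\<close> \<open>l = Q' z\<close> by (auto simp: abs_mult)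
  have "z ^ 2 \<le> t ^ 2"
    using z(1,2) by (intro power_mono) auto
  then have "\<bar>flux z\<bar> \<le> t * (t * \<bar>Q' z\<bar>)"
    unfolding flux_def by (simp add: abs_mult mult_right_mono power2_eq_square mult.assoc[symmetric])
  also have "\<dots> \<le> t * (2 * B)"
    using \<open>t * \<bar>Q' z\<bar> \<le> 2 * B\<close> \<open>0 < t\<close> by (intro mult_left_mono) auto
  finally show ?thesis
    using z(1,2) \<open>t \<le> d\<close> \<open>t * (2 * B) \<le> e\<close> by (intro exI[of _ z]) auto
qed

lemma flux_cubic_bound: "\<exists>M. \<forall>t. 0 < t \<and> t \<le> 1 \<longrightarrow> \<bar>flux t\<bar> \<le> M * t ^ 3"
proof -
  have "continuous_on {0..1} (\<lambda>r. Q r - Q r ^ 3)"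
    by (intro continuous_on_diff continuous_on_power continuous_on_subset[OF continuous_on_Q]) auto
  then obtain M where M: "\<And>r. r \<in> {0..1} \<Longrightarrow> norm (Q r - Q r ^ 3) \<le> M"
    using continuous_on_compact_bound[OF compact_Icc] by blast
  have "\<bar>flux t\<bar> \<le> M * t ^ 3" if t: "0 < t" "t \<le> 1" for t
  proof (rule field_le_epsilon)
    fix e :: real
    assume "0 < e"
    then obtain z where z: "0 < z" "z < t" "\<bar>flux z\<bar> \<le> e"
      using exists_small_flux_near_0[OF t(1)] by blast
    have "(flux has_real_derivative r ^ 2 * (Q r - Q r ^ 3)) (at r)" if "z \<le> r" for r
      using flux_deriv z(1) that by simp
    then obtain \<xi> where \<xi>: "z < \<xi>" "\<xi> < t" "flux t - flux z = (t - z) * (\<xi> ^ 2 * (Q \<xi> - Q \<xi> ^ 3))"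
      using MVT2[of z t flux "\<lambda>r. r ^ 2 * (Q r - Q r ^ 3)"] z(2) by blast
    have "\<bar>(t - z) * (\<xi> ^ 2 * (Q \<xi> - Q \<xi> ^ 3))\<bar> \<le> t * (t ^ 2 * M)"
      unfolding abs_mult using \<xi> z(1) M[of \<xi>] t
      by (intro mult_mono power_mono) (auto simp: abs_le_iff power_abs[symmetric])
    then show "\<bar>flux t\<bar> \<le> M * t ^ 3 + e"
      using \<xi>(3) z(3) by (simp add: power3_eq_cube power2_eq_square algebra_simps abs_le_iff)
  qed
  then show ?thesis
    by blast
qed

lemma Q'_tendsto_0: "(Q' \<longlongrightarrow> 0) (at_right 0)"
proof -
  obtain M where M: "\<And>t. 0 < t \<Longrightarrow> t \<le> 1 \<Longrightarrow> \<bar>flux t\<bar> \<le> M * t ^ 3"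
    using flux_cubic_bound by blast
  have "\<bar>Q' t\<bar> \<le> M * t" if "0 < t" "t < 1" for t
  proof -
    have "t ^ 2 * \<bar>Q' t\<bar> \<le> t ^ 2 * (M * t)"
      using M[of t] that by (simp add: flux_def abs_mult power3_eq_cube power2_eq_square mult.assoc)
    then show ?thesis
      using that by simp
  qed
  then have "eventually (\<lambda>t. norm (Q' t) \<le> M * t) (at_right 0)"
    unfolding eventually_at_right_field by (intro exI[of _ 1]) auto
  moreover have "((\<lambda>t. M * t) \<longlongrightarrow> 0) (at_right 0)"
    by (intro tendsto_eq_intros) auto
  ultimately show ?thesis
    by (rule Lim_null_comparison)
qed

lemma Q_tendsto_Q_0: "(Q \<longlongrightarrow> Q 0) (at_right 0)"
proof -
  have "(Q \<longlongrightarrow> Q 0) (at 0 within {0..})"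
    using continuous_on_Q unfolding continuous_on_def by auto
  then show ?thesis
    by (rule tendsto_within_subset) auto
qed

lemma Q_0_sq_ge_2: "2 \<le> Q 0 ^ 2"
proof -
  have "(energy \<longlongrightarrow> 0 ^ 2 / 2 - Q 0 ^ 2 / 2 + Q 0 ^ 4 / 4) (at_right 0)"
    unfolding energy_def[abs_def] by (intro tendsto_intros Q'_tendsto_0 Q_tendsto_Q_0) simp_all
  moreover have "eventually (\<lambda>t. 0 \<le> energy t) (at_right 0)"
    unfolding eventually_at_right_field by (intro exI[of _ 1]) (auto intro: energy_nonneg)
  ultimately have "0 \<le> 0 ^ 2 / 2 - Q 0 ^ 2 / 2 + Q 0 ^ 4 / 4"
    by (rule tendsto_lowerbound) simp
  then show ?thesis
    using Q_pos[of 0] by (intro sq_ge_2_if_quartic_nonneg) auto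
qed

lemma Q'_nonpos_near_0: "\<exists>b>0. \<forall>t. 0 < t \<and> t < b \<longrightarrow> Q' t \<le> 0"
proof -
  have "1 < Q 0"
    using Q_0_sq_ge_2 Q_pos[of 0] power_le_one[of "Q 0" 2] by fastforce
  then obtain b where "0 < b" and b: "\<And>t. 0 < t \<Longrightarrow> t < b \<Longrightarrow> 1 < Q t"
    using order_tendstoD(1)[OF Q_tendsto_Q_0] unfolding eventually_at_right_field by blast
  have "Q' t \<le> 0" if t: "0 < t" "t < b" for t
  proof -
    have flux_ge: "flux t \<le> flux s" if "0 < s" "s \<le> t" for s
    proof (rule DERIV_nonpos_imp_nonincreasing[where f = flux, OF \<open>s \<le> t\<close>])
      fix r assume r: "s \<le> r" "r \<le> t"
      then have "1 < Q r"
        using b that t by simp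
      then have "Q r - Q r ^ 3 \<le> 0"
        using sub_cube_neg_if_sq_gt_1[of "Q r"] one_less_power[of "Q r" 2] by simp
      moreover have "(flux has_real_derivative r ^ 2 * (Q r - Q r ^ 3)) (at r)"
        using flux_deriv[of r] r that by simp
      ultimately show "\<exists>y. (flux has_real_derivative y) (at r) \<and> y \<le> 0"
        by (intro exI[of _ "r ^ 2 * (Q r - Q r ^ 3)"]) (simp add: mult_nonneg_nonpos)
    qed
    have "eventually (\<lambda>s. flux t \<le> flux s) (at_right 0)"
      unfolding eventually_at_right_field using flux_ge t(1) by (intro exI[of _ t]) auto
    moreover have "(flux \<longlongrightarrow> 0 ^ 2 * 0) (at_right 0)"
      unfolding flux_def[abs_def] by (intro tendsto_intros Q'_tendsto_0)
    ultimately have "flux t \<le> 0 ^ 2 * 0"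
      using tendsto_lowerbound trivial_limit_at_right_real by blast
    then show ?thesis
      using t unfolding flux_def by (simp add: mult_le_0_iff)
  qed
  then show ?thesis
    using \<open>0 < b\<close> by blast
qed

lemma Q'_nonpos:
  assumes "0 < t"
  shows "Q' t \<le> 0"
proof (rule ccontr)
  assume "\<not> Q' t \<le> 0"
  obtain b where "0 < b" and b: "\<And>s. 0 < s \<Longrightarrow> s < b \<Longrightarrow> Q' s \<le> 0"
    using Q'_nonpos_near_0 by blast
  define a where "a = min b t / 2"
  have "0 < a" "a < t" "Q' a \<le> 0"
    using \<open>0 < b\<close> assms b[of a] unfolding a_def by auto
  then obtain t0 where t0: "a \<le> t0" "t0 < t" "Q' t0 = 0" "\<And>s. t0 < s \<Longrightarrow> s \<le> t \<Longrightarrow> 0 < Q' s"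
    using last_hitting_time[of a t Q' 0] continuous_on_Q' \<open>\<not> Q' t \<le> 0\<close> by auto
  have "0 < t0"
    using \<open>0 < a\<close> t0(1) by simp
  have "0 \<le> Q'' t0"
    using deriv_nonneg_if_greater_right[OF Q'_deriv[OF \<open>0 < t0\<close>] t0(2)] t0(3,4) by simp
  moreover have "2 \<le> Q t0 ^ 2"
    using Q_sq_ge_2_if_Q'_zero[OF \<open>0 < t0\<close> t0(3)] .
  then have "Q'' t0 < 0"
    using Q''_eq[OF \<open>0 < t0\<close>] t0(3) Q_pos[of t0] \<open>0 < t0\<close> sub_cube_neg_if_sq_gt_1[of "Q t0"] by simp
  ultimately show False
    by simp
qed

lemma Q_antimono:
  assumes "0 < a" "a \<le> b"
  shows "Q b \<le> Q a"
proof (rule DERIV_nonpos_imp_nonincreasing[where f = Q, OF assms(2)])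
  fix x assume "a \<le> x"
  with assms have "0 < x"
    by simp
  then show "\<exists>y. (Q has_real_derivative y) (at x) \<and> y \<le> 0"
    using Q_deriv Q'_nonpos by blast
qed

definition U :: "real \<Rightarrow> real" where "U t = t * Q t"

definition U' :: "real \<Rightarrow> real" where "U' t = Q t + t * Q' t"

lemma U_deriv: "0 < t \<Longrightarrow> (U has_real_derivative U' t) (at t)"
  unfolding U_def[abs_def] U'_def by (rule derivative_eq_intros Q_deriv refl | simp)+

lemma U'_deriv: "0 < t \<Longrightarrow> (U' has_real_derivative U t * (1 - Q t ^ 2)) (at t)"
proof -
  assume "0 < t"
  have "(U' has_real_derivative Q' t + (Q' t + t * Q'' t)) (at t)"
    unfolding U'_def[abs_def]
    by (rule derivative_eq_intros Q_deriv[OF \<open>0 < t\<close>] Q'_deriv[OF \<open>0 < t\<close>] refl | simp)+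
  moreover have "Q' t + (Q' t + t * Q'' t) = U t * (1 - Q t ^ 2)"
    unfolding Q''_eq[OF \<open>0 < t\<close>] U_def using \<open>0 < t\<close> by (simp add: field_simps power2_eq_square power3_eq_cube)
  ultimately show ?thesis
    by simp
qed

lemma U_pos: "0 < t \<Longrightarrow> 0 < U t"
  unfolding U_def using Q_pos[of t] by simp

lemma continuous_on_U: "continuous_on {0..} U"
  unfolding U_def[abs_def] by (intro continuous_on_mult continuous_on_id continuous_on_Q)

lemma isCont_U': "0 < t \<Longrightarrow> isCont U' t"
  using U'_deriv DERIV_isCont by blast

lemma continuous_on_U': "0 < a \<Longrightarrow> continuous_on {a..b} U'"
  by (intro continuous_at_imp_continuous_on) (auto intro!: isCont_U')

definition U_energy :: "real \<Rightarrow> real" where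
  "U_energy t = U' t ^ 2 / 2 - U t ^ 2 / 2 + t ^ 2 * Q t ^ 4 / 4"

lemma U_energy_deriv: "0 < t \<Longrightarrow> (U_energy has_real_derivative - t * Q t ^ 4 / 2) (at t)"
proof -
  assume "0 < t"
  have D: "(U_energy has_real_derivative
      U' t * (U t * (1 - Q t ^ 2)) - U t * U' t + (2 * t * Q t ^ 4 / 4 + t ^ 2 * (4 * Q t ^ 3 * Q' t) / 4)) (at t)"
    unfolding U_energy_def[abs_def]
    by (rule derivative_eq_intros U_deriv[OF \<open>0 < t\<close>] U'_deriv[OF \<open>0 < t\<close>] Q_deriv[OF \<open>0 < t\<close>] refl | simp)+
  have E: "U' t * (U t * (1 - Q t ^ 2)) - U t * U' t + (2 * t * Q t ^ 4 / 4 + t ^ 2 * (4 * Q t ^ 3 * Q' t) / 4)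
      = - t * Q t ^ 4 / 2"
    unfolding U_def U'_def by (simp add: field_simps power2_eq_square power3_eq_cube power4_eq_xxxx)
  show ?thesis
    using D unfolding E .
qed

lemma U_energy_antimono:
  assumes "0 < a" "a \<le> b"
  shows "U_energy b \<le> U_energy a"
proof (rule DERIV_nonpos_imp_nonincreasing[where f = U_energy, OF assms(2)])
  fix x assume "a \<le> x"
  with assms have "0 < x"
    by simp
  then show "\<exists>y. (U_energy has_real_derivative y) (at x) \<and> y \<le> 0"
    using U_energy_deriv[of x] by (intro exI[of _ "- x * Q x ^ 4 / 2"]) simp
qed

(* Where U stays away from 0, Q --> 0 makes U'' = U (1 - Q^2) bounded below, so U
   eventually grows linearly, which contradicts Q = U / t --> 0. *)

lemma exists_U_less:
  assumes "0 < m"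
  shows "\<exists>t\<ge>t0. U t < m"
proof (rule ccontr)
  assume "\<not> ?thesis"
  then have U_ge: "\<And>t. t0 \<le> t \<Longrightarrow> m \<le> U t"
    by (simp add: not_less)
  obtain N where N: "\<And>t. N \<le> t \<Longrightarrow> Q t < 1 / 2"
    using order_tendstoD(2)[OF Q_tendsto_0, of "1 / 2"] by (auto simp: eventually_at_top_linorder)
  define t1 where "t1 = max 1 (max N t0)"
  have "0 < t1" "N \<le> t1" "t0 \<le> t1"
    unfolding t1_def by auto
  have U''_ge: "3 / 4 * m \<le> U t * (1 - Q t ^ 2)" if "t1 \<le> t" for t
  proof -
    have "0 < Q t" "Q t < 1 / 2"
      using Q_pos[of t] N[of t] that \<open>0 < t1\<close> \<open>N \<le> t1\<close> by auto
    then have "3 / 4 \<le> 1 - Q t ^ 2"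
      using power_strict_mono[of "Q t" "1 / 2" 2] by (simp add: power2_eq_square)
    moreover have "m \<le> U t"
      using U_ge that \<open>t0 \<le> t1\<close> by simp
    ultimately have "m * (3 / 4) \<le> U t * (1 - Q t ^ 2)"
      using assms by (intro mult_mono) auto
    then show ?thesis
      by simp
  qed
  obtain t2 where "t1 \<le> t2" and U'_ge: "\<And>t. t2 \<le> t \<Longrightarrow> 1 \<le> U' t"
    using eventually_ge_1_if_deriv_ge[of "3 / 4 * m" t1 U' "\<lambda>t. U t * (1 - Q t ^ 2)"]
      assms \<open>0 < t1\<close> U'_deriv U''_ge by force
  have "2 * t2 - t2 \<le> U (2 * t2) - U t2"
    using \<open>t1 \<le> t2\<close> \<open>0 < t1\<close> U'_ge
    by (intro increment_le_of_deriv_le[where f' = "\<lambda>_. 1" and g' = U'])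
      (auto intro!: derivative_eq_intros U_deriv)
  moreover have "0 < U t2"
    using U_pos \<open>t1 \<le> t2\<close> \<open>0 < t1\<close> by simp
  ultimately have "t2 * 1 < t2 * (2 * Q (2 * t2))"
    by (simp add: U_def)
  then have "1 / 2 < Q (2 * t2)"
    using \<open>t1 \<le> t2\<close> \<open>0 < t1\<close> mult_less_cancel_left_pos[of t2 1] by simp
  then show False
    using N[of "2 * t2"] \<open>t1 \<le> t2\<close> \<open>N \<le> t1\<close> \<open>0 < t1\<close> by simp
qed

lemma U_energy_nonneg:
  assumes "0 < t"
  shows "0 \<le> U_energy t"
proof (rule ccontr)
  assume "\<not> 0 \<le> U_energy t"
  define m where "m = sqrt (- 2 * U_energy t)"
  have "0 < m"
    unfolding m_def using \<open>\<not> 0 \<le> U_energy t\<close> by simp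
  have "m \<le> U s" if "t \<le> s" for s
  proof -
    have "- (U s ^ 2 / 2) \<le> U_energy s"
      unfolding U_energy_def by simp
    moreover have "U_energy s \<le> U_energy t"
      using U_energy_antimono assms that by blast
    ultimately have "- 2 * U_energy t \<le> U s ^ 2"
      by simp
    then have "m \<le> sqrt (U s ^ 2)"
      unfolding m_def by (rule real_sqrt_le_mono)
    then show ?thesis
      using U_pos[of s] assms that by simp
  qed
  then show False
    using exists_U_less[OF \<open>0 < m\<close>, of t] by force
qed

lemma Q_sq_ge_2_if_U'_zero: "0 < t \<Longrightarrow> U' t = 0 \<Longrightarrow> 2 \<le> Q t ^ 2"
  using U_energy_nonneg[of t] Q_pos[of t]
  by (intro sq_ge_2_if_quartic_nonneg) (auto simp: U_energy_def U_def power_mult_distrib)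

lemma U'_zero_after:
  assumes "0 < T" "0 \<le> U' T"
  shows "\<exists>s\<ge>T. U' s = 0"
proof (cases "\<exists>s\<ge>T. U' s \<le> 0")
  case True
  then obtain s where "T \<le> s" "U' s \<le> 0"
    by blast
  then show ?thesis
    using IVT2'[of U' s 0 T] continuous_on_U'[OF assms(1)] assms(2) by force
next
  case False
  then have U'_pos: "\<And>s. T \<le> s \<Longrightarrow> 0 < U' s"
    using not_le by blast
  have "U T \<le> U s" if "T \<le> s" for s
  proof (rule DERIV_nonneg_imp_nondecreasing[where f = U, OF that])
    fix x assume "T \<le> x"
    with assms(1) have "0 < x"
      by simp
    with U'_pos[of x] \<open>T \<le> x\<close> show "\<exists>y. (U has_real_derivative y) (at x) \<and> 0 \<le> y"
      by (intro exI[of _ "U' x"]) (simp add: U_deriv)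
  qed
  then show ?thesis
    using exists_U_less[OF U_pos[OF assms(1)], of T] by force
qed


lemma rescaled_profile_at:
  assumes "0 < T" "T \<le> 1" "1999 / 1000 \<le> U T ^ 2"
  shows "rescaled_profile (\<lambda>s. Q (T * s) / Q T) (\<lambda>s. - flux (T * s) / U T)
    (\<lambda>s. s ^ 2 * (U T ^ 2 * (Q (T * s) / Q T) ^ 3 - T ^ 2 * (Q (T * s) / Q T)))"
proof unfold_locales
  have chain: "((\<lambda>s. f (T * s)) has_real_derivative D * T) (at s)"
    if "(f has_real_derivative D) (at (T * s))" for f D s
    using DERIV_chain2[OF that DERIV_cmult_Id[of T]] .
  have q: "0 < Q T" "0 < U T"
    using Q_pos[of T] U_pos[of T] assms(1) by auto
  fix s :: real
  assume "0 < s"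
  then have "0 < T * s"
    using assms(1) by simp
  have "((\<lambda>s. Q (T * s) / Q T) has_real_derivative Q' (T * s) * T / Q T) (at s)"
    using DERIV_cdivide[OF chain[OF Q_deriv[OF \<open>0 < T * s\<close>]]] .
  moreover have "Q' (T * s) * T / Q T = - (- flux (T * s) / U T) / s ^ 2"
    using \<open>0 < s\<close> assms(1) q unfolding flux_def U_def by (simp add: field_simps power2_eq_square)
  ultimately show "((\<lambda>s. Q (T * s) / Q T) has_real_derivative - (- flux (T * s) / U T) / s ^ 2) (at s)"
    by simp
  have "((\<lambda>s. - flux (T * s) / U T) has_real_derivative
      - ((T * s) ^ 2 * (Q (T * s) - Q (T * s) ^ 3) * T) / U T) (at s)"
    using DERIV_cdivide[OF DERIV_minus[OF chain[OF flux_deriv[OF \<open>0 < T * s\<close>]]]] by simp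
  moreover have "- ((T * s) ^ 2 * (Q (T * s) - Q (T * s) ^ 3) * T) / U T
      = s ^ 2 * (U T ^ 2 * (Q (T * s) / Q T) ^ 3 - T ^ 2 * (Q (T * s) / Q T))"
    using assms(1) q unfolding U_def by (simp add: field_simps power2_eq_square power3_eq_cube)
  ultimately show "((\<lambda>s. - flux (T * s) / U T) has_real_derivative
      s ^ 2 * (U T ^ 2 * (Q (T * s) / Q T) ^ 3 - T ^ 2 * (Q (T * s) / Q T))) (at s)"
    by simp
  define y where "y = Q (T * s) / Q T"
  have "0 < y"
    unfolding y_def using Q_pos[of "T * s"] \<open>0 < T * s\<close> q by simp
  have "1999 / 1000 * y ^ 3 \<le> U T ^ 2 * y ^ 3" "T ^ 2 * y \<le> y"
    using assms \<open>0 < y\<close> by (auto intro!: mult_right_mono power_le_one)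
  then show "s ^ 2 * cubic_rate (Q (T * s) / Q T)
      \<le> s ^ 2 * (U T ^ 2 * (Q (T * s) / Q T) ^ 3 - T ^ 2 * (Q (T * s) / Q T))"
    unfolding y_def[symmetric] cubic_rate_def by (intro mult_left_mono) auto
  have "flux (T * s) \<le> 0"
    unfolding flux_def using Q'_nonpos[OF \<open>0 < T * s\<close>] by (simp add: mult_nonneg_nonpos)
  then show "0 \<le> - flux (T * s) / U T"
    using q by (simp add: divide_nonpos_pos)
next
  show "Q (T * 1) / Q T = 1"
    using Q_pos[of T] assms(1) by simp
qed

lemma le_1_if_U'_nonneg:
  assumes "0 < T" "0 \<le> U' T" "U T ^ 2 < 2"
  shows "T \<le> 1"
proof -
  obtain s where "T \<le> s" "U' s = 0"
    using U'_zero_after assms(1,2) by blast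
  then have "2 \<le> Q s ^ 2"
    using Q_sq_ge_2_if_U'_zero assms(1) by simp
  also have "\<dots> \<le> Q T ^ 2"
    using Q_antimono[OF assms(1) \<open>T \<le> s\<close>] Q_pos[of s] assms(1) \<open>T \<le> s\<close> by (intro power_mono) auto
  finally have "T ^ 2 * Q T ^ 2 < 1 * Q T ^ 2"
    using assms(3) unfolding U_def by (simp only: power_mult_distrib)
  then have "T ^ 2 < 1 ^ 2"
    using mult_less_cancel_right_pos[of "Q T ^ 2" "T ^ 2" 1] Q_pos[of T] assms(1) by simp
  then show ?thesis
    using power2_less_imp_less[of T 1] by simp
qed

lemma U'_neg_if_U_sq_ge:
  assumes "0 < T" "T \<le> 1" "1999 / 1000 \<le> U T ^ 2"
  shows "U' T < 0"
proof -
  interpret rescaled: rescaled_profile "\<lambda>s. Q (T * s) / Q T" "\<lambda>s. - flux (T * s) / U T"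
    "\<lambda>s. s ^ 2 * (U T ^ 2 * (Q (T * s) / Q T) ^ 3 - T ^ 2 * (Q (T * s) / Q T))"
    using assms by (rule rescaled_profile_at)
  have "1 < - flux T / U T"
    using rescaled.P_1_gt_1 by simp
  moreover have "- flux T / U T = 1 - U' T / Q T"
    using Q_pos[of T] assms(1) unfolding flux_def U_def U'_def by (simp add: field_simps power2_eq_square)
  ultimately have "U' T / Q T < 0"
    by linarith
  then show ?thesis
    using Q_pos[of T] assms(1) by (simp add: divide_less_0_iff)
qed

lemma U_sq_less:
  assumes "0 < t"
  shows "U t ^ 2 < 1999 / 1000"
proof (rule ccontr)
  assume "\<not> ?thesis"
  then have "1999 / 1000 \<le> U t ^ 2"
    by simp
  define c where "c = sqrt (1999 / 1000)"
  have "c ^ 2 = 1999 / 1000" "0 < c"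
    unfolding c_def by simp_all
  have "c \<le> U t"
    unfolding c_def using real_sqrt_le_mono[OF \<open>1999 / 1000 \<le> U t ^ 2\<close>] U_pos[OF assms]
    by simp
  moreover have "U 0 = 0"
    by (simp add: U_def)
  ultimately obtain T where T: "0 < T" "U T = c" and below: "\<And>s. 0 \<le> s \<Longrightarrow> s < T \<Longrightarrow> U s < c"
    using first_hitting_time[of 0 t U c] assms \<open>0 < c\<close> continuous_on_subset[OF continuous_on_U, of "{0..t}"]
    by auto
  have "0 \<le> U' T"
    using deriv_nonneg_if_less_left[OF U_deriv[OF T(1)] T(1)] below T(2) by simp
  moreover have "U T ^ 2 = 1999 / 1000"
    using T(2) \<open>c ^ 2 = 1999 / 1000\<close> by simp
  ultimately have "U' T < 0"
    using le_1_if_U'_nonneg U'_neg_if_U_sq_ge T(1) by simp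
  with \<open>0 \<le> U' T\<close> show False
    by simp
qed
end

theorem lemma5p1:
  fixes Q :: "real \<Rightarrow> real"
  assumes "ground_state_profile Q"
  shows "\<forall>t>0. (6 - 10 powr (-20)) / t^2 > 3 * (Q t)^2"
proof (intro allI impI)
  fix t :: real
  assume "0 < t"
  obtain Q' Q'' where "ground_state Q Q' Q''"
    using assms unfolding ground_state_profile_def ground_state_def by blast
  then have "(t * Q t) ^ 2 < 1999 / 1000"
    using ground_state.U_sq_less[of Q Q' Q'' t] \<open>0 < t\<close> by (simp add: ground_state.U_def)
  moreover have "3 * 1999 / 1000 < 6 - 10 powr (-20 :: real)"
    by (simp add: powr_minus_divide)
  ultimately show "(6 - 10 powr (-20)) / t ^ 2 > 3 * (Q t) ^ 2"
    using \<open>0 < t\<close> by (simp add: pos_less_divide_eq power_mult_distrib algebra_simps)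
qed

end
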